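(* Let $d\ge2$, $\mathbf X\in\mathbb R^d$ elliptical with positive definite covariance $\boldsymbol\Sigma=\mathbf V\boldsymbol\Lambda\mathbf V'$, $\mathbf Y=\mathbf V'\mathbf X$, $\alpha\in(0,1)$, and for $i\in\{1,\dots,d\}$ let $\boldsymbol\Lambda_{i,\alpha}:=\mathrm{Cov}(\mathbf Y\mid Y_i\in\mathsf T^\alpha_{Y_i})$. Then: (1) $\|\boldsymbol\Lambda_{1,\alpha}\|_F\le\|\boldsymbol\Lambda_{i,\alpha}\|_F\le\|\boldsymbol\Lambda_{d,\alpha}\|_F$ for all $i$; (2) $\det(\boldsymbol\Lambda_{i,\alpha})$ is the same for all $i\in\{1,\dots,d\}$; (3) $\|\boldsymbol\Lambda_{1,\alpha}\|_{\mathrm{op}}\le\|\boldsymbol\Lambda_{i,\alpha}\|_{\mathrm{op}}$ for all $i$, and $\|\boldsymbol\Lambda_{i,\alpha}\|_{\mathrm{op}}$ takes the same value for all $i\in\{2,\dots,d\}$.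
   Context: A random vector $\mathbf X\in\mathbb R^d$ belongs to the elliptical family with parameters $(\boldsymbol\mu,\boldsymbol\Sigma,\phi)$ if its characteristic function is $\mathbb E[e^{i\mathbf t'\mathbf X}]=e^{i\mathbf t'\boldsymbol\mu}\phi(\mathbf t'\boldsymbol\Sigma\mathbf t)$ for all $\mathbf t\in\mathbb R^d$, for some scalar function $\phi$; here $\mathbf X$ is assumed to have finite second moments and covariance matrix $\boldsymbol\Sigma$, positive definite, and the conditioning events have positive probability. Spectral decomposition: $\boldsymbol\Sigma=\mathbf V\boldsymbol\Lambda\mathbf V'$ with $\mathbf V$ orthogonal (orthonormal eigenvectors as columns) and $\boldsymbol\Lambda=\mathrm{diag}(\lambda_1,\dots,\lambda_d)$, $\lambda_1\ge\cdots\ge\lambda_d>0$. For a real random variable $W$, $Q_W(p)=\inf\{x:\mathbb P(W\le x)\ge p\}$ and $\mathsf T^\alpha_W:=[Q_W(\alpha/2),Q_W(1-\alpha/2)]$. $\|\cdot\|_F$ is the Frobenius norm, $\|\cdot\|_{\mathrm{op}}$ the operator norm. *)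

theory Defs
  imports "HOL-Probability.Probability"
begin

definition quantile :: "'a measure \<Rightarrow> ('a \<Rightarrow> real) \<Rightarrow> real \<Rightarrow> real" where
  "quantile M W p = Inf {x. measure M {\<omega> \<in> space M. W \<omega> \<le> x} \<ge> p}"

definition central_interval :: "'a measure \<Rightarrow> ('a \<Rightarrow> real) \<Rightarrow> real \<Rightarrow> real set" where
  "central_interval M W \<alpha> = {quantile M W (\<alpha>/2) .. quantile M W (1 - \<alpha>/2)}"

definition cond_exp_event :: "'a measure \<Rightarrow> 'a set \<Rightarrow> ('a \<Rightarrow> real) \<Rightarrow> real" where
  "cond_exp_event M A Z = (\<integral>\<omega>. indicator A \<omega> * Z \<omega> \<partial>M) / measure M A"

definition cov_matrix :: "'a measure \<Rightarrow> ('a \<Rightarrow> real^'d) \<Rightarrow> real^'d^'d" where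
  "cov_matrix M X = (\<chi> j k. (\<integral>\<omega>. (X \<omega> $ j - (\<integral>\<omega>'. X \<omega>' $ j \<partial>M))
                                   * (X \<omega> $ k - (\<integral>\<omega>'. X \<omega>' $ k \<partial>M)) \<partial>M))"

definition cond_cov_matrix :: "'a measure \<Rightarrow> 'a set \<Rightarrow> ('a \<Rightarrow> real^'d) \<Rightarrow> real^'d^'d" where
  "cond_cov_matrix M A Y = (\<chi> j k. cond_exp_event M A
      (\<lambda>\<omega>. (Y \<omega> $ j - cond_exp_event M A (\<lambda>\<omega>'. Y \<omega>' $ j))
          * (Y \<omega> $ k - cond_exp_event M A (\<lambda>\<omega>'. Y \<omega>' $ k))))"

definition elliptical :: "'a measure \<Rightarrow> ('a \<Rightarrow> real^'d) \<Rightarrow> real^'d \<Rightarrow> real^'d^'d \<Rightarrow> (real \<Rightarrow> complex) \<Rightarrow> bool" where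
  "elliptical M X \<mu> \<Sigma> \<phi> \<longleftrightarrow>
     (\<forall>t. (\<integral>\<omega>. cis (t \<bullet> X \<omega>) \<partial>M) = cis (t \<bullet> \<mu>) * \<phi> (t \<bullet> (\<Sigma> *v t)))"

definition frob_norm :: "real^'n^'m \<Rightarrow> real" where
  "frob_norm A = sqrt (\<Sum>i\<in>UNIV. \<Sum>j\<in>UNIV. (A $ i $ j)\<^sup>2)"

definition op_norm :: "real^'n^'m \<Rightarrow> real" where
  "op_norm A = onorm (\<lambda>x. A *v x)"

end

theory Submission
  imports Defs "HOL-Real_Asymp.Real_Asymp"
begin

(*
  Standardising the principal components, Z = Lambda^(-1/2) (V'X - V'mu) has characteristic
  function phi(|t|^2): Z is spherical.  Only one-dimensional Levy uniqueness is available, so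
  sphericity is exploited through reweighted laws: for t with t_i = 0, the law of Z_i under the
  density proportional to 2 + cos(t.Z) depends on t only through |t|, and under 2 + sin(t.Z) it is
  the law of Z_i itself.  Scaling t by 1/n and letting n tend to infinity (dominated convergence)
  turns this into moment identities: for bounded g, E[g(Z_i) (t.Z)] = 0 and E[g(Z_i) (t.Z)^2]
  depends only on |t|.  Hence conditioning on Z_i in a slab J makes the conditional covariance
  of Y = V'X diagonal, Lambda_{i,alpha} = Lambda diag(a,...,a,b,a,...,a) with b in position i,
  where a and b do not depend on i.  Each Z_i is symmetric, so the central interval J = [l,u]
  satisfies u <= -l with no mass in (u,-l): values inside J are smaller in absolute value than
  values outside, which gives b <= a.  The three claims are then elementary facts about the
  matrices Lambda diag(a,...,b,...,a) for decreasing Lambda.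
*)

section \<open>Reweighted laws\<close>

definition weighted_law :: "'a measure \<Rightarrow> ('a \<Rightarrow> real) \<Rightarrow> ('a \<Rightarrow> real) \<Rightarrow> real measure" where
  "weighted_law M h U = distr (density M (\<lambda>\<omega>. ennreal (h \<omega> / (\<integral>\<omega>. h \<omega> \<partial>M)))) borel U"

context prob_space
begin

context
  fixes h U :: "'a \<Rightarrow> real"
  assumes [measurable]: "h \<in> borel_measurable M" "U \<in> borel_measurable M"
    and h_integrable: "integrable M h" and h_nonneg: "\<And>\<omega>. 0 \<le> h \<omega>"
    and h_mass: "0 < (\<integral>\<omega>. h \<omega> \<partial>M)"
begin

lemma real_distribution_weighted_law: "real_distribution (weighted_law M h U)"
proof -
  let ?c = "\<integral>\<omega>. h \<omega> \<partial>M"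
  have "emeasure (density M (\<lambda>\<omega>. ennreal (h \<omega> / ?c))) (space M) = (\<integral>\<^sup>+\<omega>. ennreal (h \<omega> / ?c) \<partial>M)"
    by (simp add: emeasure_density)
  also have "\<dots> = ennreal (\<integral>\<omega>. h \<omega> / ?c \<partial>M)"
    using h_integrable h_nonneg h_mass by (intro nn_integral_eq_integral) auto
  also have "(\<integral>\<omega>. h \<omega> / ?c \<partial>M) = 1"
    using h_mass by simp
  finally have "prob_space (density M (\<lambda>\<omega>. ennreal (h \<omega> / ?c)))"
    by (intro prob_spaceI) simp
  then show ?thesis
    unfolding weighted_law_def by (intro prob_space.real_distribution_distr) auto
qed

lemma integral_weighted_law:
  fixes g :: "real \<Rightarrow> 'b::{banach, second_countable_topology}"
  assumes [measurable]: "g \<in> borel_measurable borel"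
  shows "integral\<^sup>L (weighted_law M h U) g = (\<integral>\<omega>. h \<omega> *\<^sub>R g (U \<omega>) \<partial>M) /\<^sub>R (\<integral>\<omega>. h \<omega> \<partial>M)"
  unfolding weighted_law_def using h_nonneg
  by (simp add: integral_distr integral_density divide_inverse_commute
      flip: scaleR_scaleR integral_scaleR_right)

lemma char_weighted_law:
  "char (weighted_law M h U) u = (\<integral>\<omega>. h \<omega> *\<^sub>R iexp (u * U \<omega>) \<partial>M) /\<^sub>R (\<integral>\<omega>. h \<omega> \<partial>M)"
  unfolding char_def by (rule integral_weighted_law) simp

end

end

section \<open>Quantiles\<close>

context prob_space
begin

lemma measure_le_eq_cdf:
  fixes W :: "'a \<Rightarrow> real"
  assumes "W \<in> borel_measurable M"
  shows "measure M {\<omega>\<in>space M. W \<omega> \<le> x} = cdf (distr M borel W) x"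
  unfolding cdf_def using assms by (subst measure_distr) (auto intro!: arg_cong[where f="measure M"])

context
  fixes W :: "'a \<Rightarrow> real" and p :: real
  assumes measurable_W [measurable]: "W \<in> borel_measurable M" and p: "0 < p" "p < 1"
begin

lemma quantile_set_nonempty: "{x. p \<le> measure M {\<omega>\<in>space M. W \<omega> \<le> x}} \<noteq> {}"
proof -
  interpret D: real_distribution "distr M borel W" by simp
  have "\<forall>\<^sub>F x in at_top. p < cdf (distr M borel W) x"
    using order_tendstoD(1)[OF D.cdf_lim_at_top_prob p(2)] .
  then obtain x where "p < cdf (distr M borel W) x"
    by (auto simp: eventually_at_top_linorder)
  then show ?thesis
    by (auto simp: measure_le_eq_cdf[OF measurable_W] intro: less_imp_le)
qed

lemma bdd_below_quantile_set: "bdd_below {x. p \<le> measure M {\<omega>\<in>space M. W \<omega> \<le> x}}"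
proof -
  interpret D: real_distribution "distr M borel W" by simp
  have "\<forall>\<^sub>F x in at_bot. cdf (distr M borel W) x < p"
    using order_tendstoD(2)[OF D.cdf_lim_at_bot p(1)] .
  then obtain N where N: "\<And>x. x \<le> N \<Longrightarrow> cdf (distr M borel W) x < p"
    by (auto simp: eventually_at_bot_linorder)
  show ?thesis
  proof (rule bdd_belowI)
    fix x
    assume "x \<in> {x. p \<le> measure M {\<omega>\<in>space M. W \<omega> \<le> x}}"
    then have "\<not> cdf (distr M borel W) x < p"
      by (simp add: measure_le_eq_cdf[OF measurable_W])
    then show "N \<le> x"
      using N by (meson linorder_not_le less_imp_le)
  qed
qed

lemma measure_le_less_if_below_quantile:
  assumes "x < quantile M W p"
  shows "measure M {\<omega>\<in>space M. W \<omega> \<le> x} < p"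
  using cInf_lower[OF _ bdd_below_quantile_set, of x] assms
  unfolding quantile_def by (force simp: not_less[symmetric])

lemma measure_le_quantile_ge: "p \<le> measure M {\<omega>\<in>space M. W \<omega> \<le> quantile M W p}"
proof -
  interpret D: real_distribution "distr M borel W" by simp
  let ?q = "quantile M W p"
  have "p \<le> cdf (distr M borel W) y" if q_less: "?q < y" for y
  proof -
    obtain x where x: "p \<le> measure M {\<omega>\<in>space M. W \<omega> \<le> x}" "x < y"
      using cInf_lessD[OF quantile_set_nonempty, of y] q_less unfolding quantile_def by blast
    then show ?thesis
      using D.cdf_nondecreasing[of x y] by (simp add: measure_le_eq_cdf[OF measurable_W])
  qed
  moreover have "(cdf (distr M borel W) \<longlongrightarrow> cdf (distr M borel W) ?q) (at_right ?q)"
    using D.cdf_is_right_cont by (simp add: continuous_within)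
  ultimately have "p \<le> cdf (distr M borel W) ?q"
    by (intro tendsto_lowerbound) (auto intro: eventually_mono[OF eventually_at_right_less])
  then show ?thesis
    by (simp add: measure_le_eq_cdf[OF measurable_W])
qed

lemma quantile_affine:
  assumes "0 < b"
  shows "quantile M (\<lambda>\<omega>. a + b * W \<omega>) p = a + b * quantile M W p"
proof -
  let ?S = "{x. p \<le> measure M {\<omega>\<in>space M. W \<omega> \<le> x}}"
  have "{\<omega>\<in>space M. a + b * W \<omega> \<le> y} = {\<omega>\<in>space M. W \<omega> \<le> (y - a) / b}" for y
    using assms by (auto simp: field_simps)
  then have "(\<lambda>x. a + b * x) ` ?S = {y. p \<le> measure M {\<omega>\<in>space M. a + b * W \<omega> \<le> y}}"
    using assms by (auto simp: image_iff intro!: exI[of _ "(y - a) / b" for y])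
  moreover have "a + b * Inf ?S = Inf ((\<lambda>x. a + b * x) ` ?S)"
    using assms quantile_set_nonempty bdd_below_quantile_set
    by (intro continuous_at_Inf_mono) (auto intro!: monoI continuous_intros)
  ultimately show ?thesis
    unfolding quantile_def by simp
qed

end

lemma quantile_symmetric:
  fixes W :: "'a \<Rightarrow> real"
  assumes [measurable]: "W \<in> borel_measurable M"
    and sym: "distr M borel (\<lambda>\<omega>. - W \<omega>) = distr M borel W"
    and \<alpha>: "0 < \<alpha>" "\<alpha> < 1"
  defines "l \<equiv> quantile M W (\<alpha> / 2)" and "u \<equiv> quantile M W (1 - \<alpha> / 2)"
  shows "u \<le> - l" and "measure M {\<omega>\<in>space M. u < W \<omega> \<and> W \<omega> < - l} = 0"
proof -
  have p: "0 < \<alpha> / 2" "\<alpha> / 2 < 1" "0 < 1 - \<alpha> / 2" "1 - \<alpha> / 2 < 1"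
    using \<alpha> by auto
  have less_eq_greater: "measure M {\<omega>\<in>space M. W \<omega> < x} = measure M {\<omega>\<in>space M. - x < W \<omega>}" for x
  proof -
    have "measure (distr M borel (\<lambda>\<omega>. - W \<omega>)) {..<x} = measure (distr M borel W) {..<x}"
      by (simp only: sym)
    then show ?thesis
      by (simp add: measure_distr vimage_def Int_def conj_commute minus_less_iff)
  qed
  have greater: "measure M {\<omega>\<in>space M. x < W \<omega>} = 1 - measure M {\<omega>\<in>space M. W \<omega> \<le> x}" for x
    using prob_neg[of "\<lambda>\<omega>. W \<omega> \<le> x"] by (simp add: not_le)
  show "u \<le> - l"
  proof (rule ccontr)
    assume "\<not> u \<le> - l"
    define x where "x = (l - u) / 2"
    have "x < l" "- x < u"
      using \<open>\<not> u \<le> - l\<close> by (simp_all add: x_def field_simps)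
    then have "measure M {\<omega>\<in>space M. W \<omega> \<le> x} < \<alpha> / 2"
      and "measure M {\<omega>\<in>space M. W \<omega> \<le> - x} < 1 - \<alpha> / 2"
      using measure_le_less_if_below_quantile[of W "\<alpha> / 2" x]
        measure_le_less_if_below_quantile[of W "1 - \<alpha> / 2" "- x"] p
      by (simp_all add: l_def u_def)
    moreover have "measure M {\<omega>\<in>space M. W \<omega> < x} \<le> measure M {\<omega>\<in>space M. W \<omega> \<le> x}"
      by (intro finite_measure_mono) auto
    ultimately show False
      using less_eq_greater[of x] greater[of "- x"] by simp
  qed
  show "measure M {\<omega>\<in>space M. u < W \<omega> \<and> W \<omega> < - l} = 0"
  proof (cases "u < - l")
    case True
    have "{\<omega>\<in>space M. W \<omega> < - l} = {\<omega>\<in>space M. W \<omega> \<le> u} \<union> {\<omega>\<in>space M. u < W \<omega> \<and> W \<omega> < - l}"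
      using True by auto
    then have "measure M {\<omega>\<in>space M. W \<omega> < - l}
        = measure M {\<omega>\<in>space M. W \<omega> \<le> u} + measure M {\<omega>\<in>space M. u < W \<omega> \<and> W \<omega> < - l}"
      by (simp only:) (rule finite_measure_Union; auto)
    moreover have "\<alpha> / 2 \<le> measure M {\<omega>\<in>space M. W \<omega> \<le> l}" "1 - \<alpha> / 2 \<le> measure M {\<omega>\<in>space M. W \<omega> \<le> u}"
      using measure_le_quantile_ge[of W "\<alpha> / 2"] measure_le_quantile_ge[of W "1 - \<alpha> / 2"] p
      by (simp_all add: l_def u_def)
    ultimately have "measure M {\<omega>\<in>space M. u < W \<omega> \<and> W \<omega> < - l} \<le> 0"
      using less_eq_greater[of "- l"] greater[of l] by simp
    then show ?thesis
      using measure_nonneg[of M "{\<omega>\<in>space M. u < W \<omega> \<and> W \<omega> < - l}"] by linarith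
  next
    case False
    then have "{\<omega>\<in>space M. u < W \<omega> \<and> W \<omega> < - l} = {}"
      by auto
    then show ?thesis
      by (simp only: measure_empty)
  qed
qed

lemma integral_indicator_comp:
  fixes W :: "'a \<Rightarrow> real"
  assumes "W \<in> borel_measurable M" "A \<in> sets borel"
  shows "(\<integral>\<omega>. indicator A (W \<omega>) \<partial>M) = measure M {\<omega>\<in>space M. W \<omega> \<in> A}"
proof -
  have "(\<integral>\<omega>. indicator A (W \<omega>) \<partial>M) = (\<integral>\<omega>. indicator {\<omega>\<in>space M. W \<omega> \<in> A} \<omega> \<partial>M)"
    by (rule Bochner_Integration.integral_cong) (auto simp: indicator_def)
  also have "\<dots> = measure M {\<omega>\<in>space M. W \<omega> \<in> A}"
    using assms by simp
  finally show ?thesis .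
qed

end

section \<open>Coordinates and diagonal matrices\<close>

definition diag_matrix :: "('n::finite \<Rightarrow> real) \<Rightarrow> real^'n^'n" where
  "diag_matrix d = (\<chi> i j. if i = j then d i else 0)"

lemma diag_matrix_mult_vec: "diag_matrix d *v x = (\<chi> i. d i * x $ i)"
  by (simp add: diag_matrix_def matrix_vector_mult_def vec_eq_iff if_distrib if_distribR cong: if_cong)

lemma det_diag_matrix: "det (diag_matrix d) = (\<Prod>i\<in>UNIV. d i)"
  by (subst det_diagonal) (auto simp: diag_matrix_def)

lemma frob_norm_diag_matrix: "frob_norm (diag_matrix d) = sqrt (\<Sum>i\<in>UNIV. (d i)\<^sup>2)"
  unfolding frob_norm_def diag_matrix_def by (simp add: if_distrib if_distribR cong: if_cong)

lemma norm_vec_sq: "(norm x)\<^sup>2 = (\<Sum>i\<in>UNIV. (x $ i)\<^sup>2)" for x :: "real^'n"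
  by (simp only: power2_norm_eq_inner inner_vec_def) (simp add: power2_eq_square)

lemma axis_nth_other: "i \<noteq> j \<Longrightarrow> axis j 1 $ i = 0"
  by (simp add: axis_def)

lemma op_norm_diag_matrix:
  fixes d :: "'n::finite \<Rightarrow> real"
  shows "op_norm (diag_matrix d) = Max (range (\<lambda>i. \<bar>d i\<bar>))"
proof (rule antisym)
  let ?m = "Max (range (\<lambda>i. \<bar>d i\<bar>))"
  have le_max: "\<bar>d i\<bar> \<le> ?m" for i
    by (rule Max_ge) auto
  then have "0 \<le> ?m"
    using abs_ge_zero order_trans by blast
  show "op_norm (diag_matrix d) \<le> ?m"
    unfolding op_norm_def
  proof (rule onorm_le)
    fix x :: "real^'n"
    have "(norm (diag_matrix d *v x))\<^sup>2 = (\<Sum>i\<in>UNIV. (d i)\<^sup>2 * (x $ i)\<^sup>2)"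
      by (simp add: norm_vec_sq diag_matrix_mult_vec power_mult_distrib)
    also have "\<dots> \<le> (\<Sum>i\<in>UNIV. ?m\<^sup>2 * (x $ i)\<^sup>2)"
    proof (intro sum_mono mult_right_mono)
      show "(d i)\<^sup>2 \<le> ?m\<^sup>2" for i
        using le_max[of i] \<open>0 \<le> ?m\<close> abs_le_square_iff[of "d i" ?m] by simp
    qed simp
    also have "\<dots> = (?m * norm x)\<^sup>2"
      by (simp add: norm_vec_sq power_mult_distrib sum_distrib_left)
    finally show "norm (diag_matrix d *v x) \<le> ?m * norm x"
      by (rule power2_le_imp_le[OF _ mult_nonneg_nonneg[OF \<open>0 \<le> ?m\<close> norm_ge_zero]])
  qed
  have "?m \<in> range (\<lambda>i. \<bar>d i\<bar>)"
    by (rule Max_in) auto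
  then obtain j where j: "?m = \<bar>d j\<bar>"
    by blast
  have "norm (diag_matrix d *v axis j 1) / norm (axis j (1::real)) \<le> op_norm (diag_matrix d)"
    unfolding op_norm_def by (rule le_onorm[OF matrix_vector_mul_bounded_linear])
  moreover have "diag_matrix d *v axis j 1 = d j *\<^sub>R axis j 1"
    by (simp add: diag_matrix_mult_vec axis_def vec_eq_iff)
  ultimately show "?m \<le> op_norm (diag_matrix d)"
    using j by (simp add: norm_axis_1)
qed

definition spiked_diag :: "('n::finite \<Rightarrow> real) \<Rightarrow> real \<Rightarrow> real \<Rightarrow> 'n \<Rightarrow> real^'n^'n" where
  "spiked_diag lam a b i = diag_matrix (\<lambda>k. lam k * (if k = i then b else a))"

lemma sum_if_eq:
  fixes f g :: "'n::finite \<Rightarrow> real"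
  shows "(\<Sum>k\<in>UNIV. if k = i then f k else g k) = (\<Sum>k\<in>UNIV. g k) + (f i - g i)"
proof -
  have "(\<Sum>k\<in>UNIV. if k = i then f k else g k) = (\<Sum>k\<in>UNIV. g k + (if k = i then f i - g i else 0))"
    by (rule sum.cong) auto
  then show ?thesis
    by (simp add: sum.distrib)
qed

lemma frob_norm_spiked_diag_mono:
  fixes lam :: "'n::finite \<Rightarrow> real"
  assumes "0 \<le> b" "b \<le> a" "\<bar>lam j\<bar> \<le> \<bar>lam i\<bar>"
  shows "frob_norm (spiked_diag lam a b i) \<le> frob_norm (spiked_diag lam a b j)"
proof -
  have frob: "frob_norm (spiked_diag lam a b l)
      = sqrt ((\<Sum>k\<in>UNIV. (lam k * a)\<^sup>2) + (lam l)\<^sup>2 * (b\<^sup>2 - a\<^sup>2))" for l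
  proof -
    have "(\<Sum>k\<in>UNIV. (lam k * (if k = l then b else a))\<^sup>2)
        = (\<Sum>k\<in>UNIV. if k = l then (lam k * b)\<^sup>2 else (lam k * a)\<^sup>2)"
      by (rule sum.cong) auto
    then show ?thesis
      by (simp add: spiked_diag_def frob_norm_diag_matrix sum_if_eq power_mult_distrib algebra_simps)
  qed
  have "b\<^sup>2 \<le> a\<^sup>2" "(lam j)\<^sup>2 \<le> (lam i)\<^sup>2"
    using assms by (simp_all add: power_mono abs_le_square_iff[symmetric])
  then have "(lam i)\<^sup>2 * (b\<^sup>2 - a\<^sup>2) \<le> (lam j)\<^sup>2 * (b\<^sup>2 - a\<^sup>2)"
    by (intro mult_right_mono_neg) simp_all
  then show ?thesis
    unfolding frob by simp
qed

lemma det_spiked_diag: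
  fixes lam :: "'n::finite \<Rightarrow> real"
  shows "det (spiked_diag lam a b i) = (\<Prod>k\<in>UNIV. lam k) * (b * a ^ (CARD('n) - 1))"
proof -
  have "(\<Prod>k\<in>UNIV. if k = i then b else a) = b * (\<Prod>k\<in>UNIV - {i}. if k = i then b else a)"
    by (subst prod.remove[of _ i]) auto
  also have "(\<Prod>k\<in>UNIV - {i}. if k = i then b else a) = a ^ (CARD('n) - 1)"
    by (simp add: card_Diff_singleton)
  finally show ?thesis
    by (simp add: spiked_diag_def det_diag_matrix prod.distrib)
qed

context
  fixes lam :: "'n::finite \<Rightarrow> real" and m :: 'n and a b :: real
  assumes lam_nonneg: "\<And>k. 0 \<le> lam k" and lam_le_max: "\<And>k. lam k \<le> lam m"
    and b_nonneg: "0 \<le> b" and b_le_a: "b \<le> a"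
begin

lemma op_norm_spiked_diag_le: "op_norm (spiked_diag lam a b i) \<le> lam m * a"
  unfolding spiked_diag_def op_norm_diag_matrix
proof (rule Max.boundedI)
  show "y \<le> lam m * a" if "y \<in> range (\<lambda>k. \<bar>lam k * (if k = i then b else a)\<bar>)" for y
  proof -
    obtain k where "y = lam k * (if k = i then b else a)"
      using \<open>y \<in> _\<close> lam_nonneg b_nonneg b_le_a by (auto simp: abs_mult)
    moreover have "lam k * (if k = i then b else a) \<le> lam m * a"
      using lam_nonneg[of k] lam_le_max[of k] b_nonneg b_le_a
      by (intro mult_mono) auto
    ultimately show ?thesis
      by simp
  qed
qed auto

lemma op_norm_spiked_diag_eq:
  assumes "i \<noteq> m"
  shows "op_norm (spiked_diag lam a b i) = lam m * a"
proof (rule antisym[OF op_norm_spiked_diag_le])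
  have "lam m * a \<in> range (\<lambda>k. \<bar>lam k * (if k = i then b else a)\<bar>)"
    using assms lam_nonneg[of m] b_nonneg b_le_a by (auto intro!: image_eqI[where x=m])
  then show "lam m * a \<le> op_norm (spiked_diag lam a b i)"
    unfolding spiked_diag_def op_norm_diag_matrix by (intro Max_ge) auto
qed

end

lemma spiked_diag_norms:
  fixes lam :: "'d::{finite,linorder} \<Rightarrow> real"
  assumes antimono: "\<forall>i j. i \<le> j \<longrightarrow> lam j \<le> lam i" and pos: "\<forall>i. 0 < lam i"
    and ab: "0 \<le> b" "b \<le> a"
    and L: "\<And>i. L i = spiked_diag lam a b i"
  shows "(\<forall>i. frob_norm (L (Min UNIV)) \<le> frob_norm (L i) \<and> frob_norm (L i) \<le> frob_norm (L (Max UNIV)))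
    \<and> (\<forall>i j. det (L i) = det (L j))
    \<and> (\<forall>i. op_norm (L (Min UNIV)) \<le> op_norm (L i))
    \<and> (\<forall>i j. i \<noteq> Min UNIV \<longrightarrow> j \<noteq> Min UNIV \<longrightarrow> op_norm (L i) = op_norm (L j))"
proof (intro conjI allI impI)
  let ?m = "Min (UNIV :: 'd set)" and ?M = "Max (UNIV :: 'd set)"
  have lam_le: "lam i \<le> lam ?m" "lam ?M \<le> lam i" for i
    using antimono by simp_all
  have lam_nonneg: "0 \<le> lam i" for i
    using pos less_imp_le by blast
  fix i j
  show "frob_norm (L ?m) \<le> frob_norm (L i)" "frob_norm (L i) \<le> frob_norm (L ?M)"
    unfolding L using lam_le lam_nonneg
    by (auto intro!: frob_norm_spiked_diag_mono ab)
  show "det (L i) = det (L j)"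
    unfolding L det_spiked_diag ..
  show "op_norm (L ?m) \<le> op_norm (L i)"
    using op_norm_spiked_diag_le[of lam ?m, OF lam_nonneg lam_le(1) ab]
      op_norm_spiked_diag_eq[of lam ?m, OF lam_nonneg lam_le(1) ab]
    unfolding L by (cases "i = ?m") auto
  show "op_norm (L i) = op_norm (L j)" if "i \<noteq> ?m" "j \<noteq> ?m"
    using op_norm_spiked_diag_eq[of lam ?m, OF lam_nonneg lam_le(1) ab] that unfolding L by simp
qed

section \<open>Trigonometric identities and approximations\<close>

lemma cos_mult_iexp: "complex_of_real (cos y) * iexp x = (iexp (x + y) + iexp (x - y)) / 2"
  by (simp add: cos_of_real[symmetric] cos_exp_eq exp_add[symmetric] exp_diff[symmetric]
      algebra_simps add_divide_distrib)

lemma sin_mult_iexp: "complex_of_real (sin y) * iexp x = (iexp (x + y) - iexp (x - y)) / (2 * \<i>)"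
  by (simp add: sin_of_real[symmetric] sin_exp_eq exp_add[symmetric] exp_diff[symmetric]
      algebra_simps diff_divide_distrib)

lemma tendsto_integral_bounded_mult:
  fixes M :: "'a measure" and U V :: "'a \<Rightarrow> real" and g f :: "real \<Rightarrow> real"
    and q :: "nat \<Rightarrow> real \<Rightarrow> real" and K :: real
  assumes [measurable]: "U \<in> borel_measurable M" "V \<in> borel_measurable M" "g \<in> borel_measurable borel"
    "\<And>n. q n \<in> borel_measurable borel" "f \<in> borel_measurable borel"
    and g_bound: "\<And>x. \<bar>g x\<bar> \<le> K"
    and q_lim: "\<And>x. (\<lambda>n. q n x) \<longlonglongrightarrow> f x" and q_bound: "\<And>n x. \<bar>q n x\<bar> \<le> \<bar>f x\<bar>"
    and integrable_f: "integrable M (\<lambda>\<omega>. f (V \<omega>))"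
  shows "(\<lambda>n. \<integral>\<omega>. g (U \<omega>) * q n (V \<omega>) \<partial>M) \<longlonglongrightarrow> (\<integral>\<omega>. g (U \<omega>) * f (V \<omega>) \<partial>M)"
proof (rule integral_dominated_convergence[where w="\<lambda>\<omega>. K * \<bar>f (V \<omega>)\<bar>"])
  show "integrable M (\<lambda>\<omega>. K * \<bar>f (V \<omega>)\<bar>)"
    using integrable_f by auto
  have "0 \<le> K"
    using g_bound[of 0] by linarith
  then have "\<bar>g a\<bar> * \<bar>q n b\<bar> \<le> K * \<bar>f b\<bar>" for n a b
    by (rule mult_mono[OF g_bound q_bound _ abs_ge_zero])
  then show "AE \<omega> in M. norm (g (U \<omega>) * q n (V \<omega>)) \<le> K * \<bar>f (V \<omega>)\<bar>" for n
    by (simp add: abs_mult)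
qed (auto intro!: tendsto_mult q_lim)

lemma tendsto_scaled_sin: "(\<lambda>n. real (Suc n) * sin (x / real (Suc n))) \<longlonglongrightarrow> x"
  by real_asymp

lemma abs_scaled_sin_le:
  fixes m x :: real
  assumes "0 < m"
  shows "\<bar>m * sin (x / m)\<bar> \<le> \<bar>x\<bar>"
proof -
  have "m * \<bar>sin (x / m)\<bar> \<le> m * (\<bar>x\<bar> / m)"
    using abs_sin_x_le_abs_x[of "x / m"] assms by (intro mult_left_mono) simp_all
  then show ?thesis
    using assms by (simp add: abs_mult)
qed

lemma tendsto_scaled_versine: "(\<lambda>n. 2 * (real (Suc n))\<^sup>2 * (1 - cos (x / real (Suc n)))) \<longlonglongrightarrow> x\<^sup>2"
  by real_asymp (simp add: power2_eq_square)

lemma abs_scaled_versine_le: "\<bar>2 * (real (Suc n))\<^sup>2 * (1 - cos (x / real (Suc n)))\<bar> \<le> \<bar>x\<^sup>2\<bar>"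
proof -
  define m where "m = real (Suc n)"
  have m: "0 < m" by (simp add: m_def)
  have "cos (x / m) = 1 - 2 * (sin (x / (2 * m)))\<^sup>2"
    using cos_double_sin[of "x / (2 * m)"] m by simp
  then have "2 * m\<^sup>2 * (1 - cos (x / m)) = (2 * m * sin (x / (2 * m)))\<^sup>2"
    by (simp add: power_mult_distrib)
  moreover have "\<bar>2 * m * sin (x / (2 * m))\<bar> \<le> \<bar>x\<bar>"
    using abs_scaled_sin_le[of "2 * m"] m by simp
  ultimately show ?thesis
    unfolding m_def[symmetric] by (simp add: abs_le_square_iff)
qed

section \<open>Spherical random vectors\<close>

locale spherical = prob_space M for M :: "'a measure" +
  fixes Z :: "'a \<Rightarrow> real^'d" and \<phi> :: "real \<Rightarrow> complex"
  assumes measurable_Z [measurable]: "Z \<in> borel_measurable M"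
    and char_spherical: "\<And>t. (\<integral>\<omega>. iexp (t \<bullet> Z \<omega>) \<partial>M) = \<phi> (t \<bullet> t)"
begin

lemma measurable_component [measurable]: "(\<lambda>\<omega>. Z \<omega> $ i) \<in> borel_measurable M"
  by (rule measurable_compose[OF measurable_Z])
     (simp add: borel_measurable_continuous_onI continuous_on_component)

lemma char_shift_component:
  assumes "t $ i = 0"
  shows "(\<integral>\<omega>. iexp (u * Z \<omega> $ i + t \<bullet> Z \<omega>) \<partial>M) = \<phi> (u\<^sup>2 + t \<bullet> t)"
  using char_spherical[of "u *\<^sub>R axis i 1 + t"] assms
  by (simp add: inner_add_left inner_add_right inner_axis inner_axis' power2_eq_square)

lemma char_distr_component: "char (distr M borel (\<lambda>\<omega>. Z \<omega> $ i)) u = \<phi> (u\<^sup>2)"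
  using char_shift_component[of 0 i u] by (simp add: char_def integral_distr)

lemma distr_component_eq: "distr M borel (\<lambda>\<omega>. Z \<omega> $ i) = distr M borel (\<lambda>\<omega>. Z \<omega> $ j)"
  by (intro Levy_uniqueness real_distribution_distr) (auto simp: char_distr_component)

lemma distr_uminus_component: "distr M borel (\<lambda>\<omega>. - Z \<omega> $ i) = distr M borel (\<lambda>\<omega>. Z \<omega> $ i)"
proof -
  have "char (distr M borel (\<lambda>\<omega>. - Z \<omega> $ i)) u = \<phi> (u\<^sup>2)" for u
    using char_distr_component[of i "- u"] by (simp add: char_def integral_distr)
  then show ?thesis
    by (intro Levy_uniqueness real_distribution_distr) (auto simp: char_distr_component)
qed

lemma integrable_iexp_shift: "integrable M (\<lambda>\<omega>. iexp (u * Z \<omega> $ i + t \<bullet> Z \<omega>))"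
proof (rule integrable_iexp)
  have "(\<lambda>\<omega>. u * Z \<omega> $ i + t \<bullet> Z \<omega>) \<in> borel_measurable M"
    by measurable
  then show "(\<lambda>\<omega>. complex_of_real (u * Z \<omega> $ i + t \<bullet> Z \<omega>)) \<in> borel_measurable M"
    by auto
qed simp

lemma integral_cos_inner_iexp:
  assumes "t $ i = 0"
  shows "(\<integral>\<omega>. cos (t \<bullet> Z \<omega>) *\<^sub>R iexp (u * Z \<omega> $ i) \<partial>M) = \<phi> (u\<^sup>2 + t \<bullet> t)"
proof -
  have "(\<integral>\<omega>. cos (t \<bullet> Z \<omega>) *\<^sub>R iexp (u * Z \<omega> $ i) \<partial>M)
      = (\<integral>\<omega>. (iexp (u * Z \<omega> $ i + t \<bullet> Z \<omega>) + iexp (u * Z \<omega> $ i + (- t) \<bullet> Z \<omega>)) / 2 \<partial>M)"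
    by (rule Bochner_Integration.integral_cong)
       (simp_all only: scaleR_conv_of_real cos_mult_iexp inner_minus_left diff_conv_add_uminus)
  also have "\<dots> = ((\<integral>\<omega>. iexp (u * Z \<omega> $ i + t \<bullet> Z \<omega>) \<partial>M) + (\<integral>\<omega>. iexp (u * Z \<omega> $ i + (- t) \<bullet> Z \<omega>) \<partial>M)) / 2"
    by (simp only: integral_divide_zero
        Bochner_Integration.integral_add[OF integrable_iexp_shift integrable_iexp_shift])
  also have "\<dots> = \<phi> (u\<^sup>2 + t \<bullet> t)"
    using char_shift_component[of t i u] char_shift_component[of "- t" i u] assms by simp
  finally show ?thesis .
qed

lemma integral_sin_inner_iexp:
  assumes "t $ i = 0"
  shows "(\<integral>\<omega>. sin (t \<bullet> Z \<omega>) *\<^sub>R iexp (u * Z \<omega> $ i) \<partial>M) = 0"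
proof -
  have "(\<integral>\<omega>. sin (t \<bullet> Z \<omega>) *\<^sub>R iexp (u * Z \<omega> $ i) \<partial>M)
      = (\<integral>\<omega>. (iexp (u * Z \<omega> $ i + t \<bullet> Z \<omega>) - iexp (u * Z \<omega> $ i + (- t) \<bullet> Z \<omega>)) / (2 * \<i>) \<partial>M)"
    by (rule Bochner_Integration.integral_cong)
       (simp_all only: scaleR_conv_of_real sin_mult_iexp inner_minus_left diff_conv_add_uminus)
  also have "\<dots> = ((\<integral>\<omega>. iexp (u * Z \<omega> $ i + t \<bullet> Z \<omega>) \<partial>M) - (\<integral>\<omega>. iexp (u * Z \<omega> $ i + (- t) \<bullet> Z \<omega>) \<partial>M)) / (2 * \<i>)"
    by (simp only: integral_divide_zero
        Bochner_Integration.integral_diff[OF integrable_iexp_shift integrable_iexp_shift])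
  also have "\<dots> = 0"
    using char_shift_component[of t i u] char_shift_component[of "- t" i u] assms by simp
  finally show ?thesis .
qed

lemma integral_component_eq:
  fixes g :: "real \<Rightarrow> real"
  assumes [measurable]: "g \<in> borel_measurable borel"
  shows "(\<integral>\<omega>. g (Z \<omega> $ i) \<partial>M) = (\<integral>\<omega>. g (Z \<omega> $ j) \<partial>M)"
proof -
  have "(\<integral>\<omega>. g (Z \<omega> $ i) \<partial>M) = integral\<^sup>L (distr M borel (\<lambda>\<omega>. Z \<omega> $ i)) g"
    by (rule integral_distr[where g="\<lambda>\<omega>. Z \<omega> $ i", symmetric]) measurable
  also have "\<dots> = integral\<^sup>L (distr M borel (\<lambda>\<omega>. Z \<omega> $ j)) g"
    by (simp only: distr_component_eq[of i j])
  also have "\<dots> = (\<integral>\<omega>. g (Z \<omega> $ j) \<partial>M)"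
    by (rule integral_distr[where g="\<lambda>\<omega>. Z \<omega> $ j"]) measurable
  finally show ?thesis .
qed

lemma integral_cos_inner:
  assumes "t $ i = 0"
  shows "complex_of_real (\<integral>\<omega>. cos (t \<bullet> Z \<omega>) \<partial>M) = \<phi> (t \<bullet> t)"
  using integral_cos_inner_iexp[OF assms, of 0] by (simp add: scaleR_conv_of_real)

lemma integral_sin_inner:
  assumes "t $ i = 0"
  shows "(\<integral>\<omega>. sin (t \<bullet> Z \<omega>) \<partial>M) = 0"
  using integral_sin_inner_iexp[OF assms, of 0] by (simp add: scaleR_conv_of_real)

(* w will be cos or sin; the constant 2 keeps the weight 2 + w (t \<bullet> Z) positive. *)
context
  fixes w :: "real \<Rightarrow> real"
  assumes [measurable]: "w \<in> borel_measurable borel"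
    and abs_w_le_1: "\<And>x. \<bar>w x\<bar> \<le> 1"
begin

lemma weight_bounds: "0 \<le> 2 + w x" "\<bar>2 + w x\<bar> \<le> 3" "1 \<le> 2 + w x"
  using abs_w_le_1[of x] by (simp_all add: abs_le_iff)

lemma integrable_weight: "integrable M (\<lambda>\<omega>. 2 + w (t \<bullet> Z \<omega>))"
  using weight_bounds(2) by (intro integrable_const_bound[where B=3] AE_I2) auto

lemma expectation_weight_pos: "0 < (\<integral>\<omega>. 2 + w (t \<bullet> Z \<omega>) \<partial>M)"
proof -
  have "1 \<le> (\<integral>\<omega>. 2 + w (t \<bullet> Z \<omega>) \<partial>M)"
    using weight_bounds(3) by (intro integral_ge_const integrable_weight AE_I2) auto
  then show ?thesis by simp
qed

lemma integral_weight_iexp: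
  "(\<integral>\<omega>. (2 + w (t \<bullet> Z \<omega>)) *\<^sub>R iexp (u * Z \<omega> $ i) \<partial>M)
    = 2 * \<phi> (u\<^sup>2) + (\<integral>\<omega>. w (t \<bullet> Z \<omega>) *\<^sub>R iexp (u * Z \<omega> $ i) \<partial>M)"
proof -
  have "integrable M (\<lambda>\<omega>. w (t \<bullet> Z \<omega>) *\<^sub>R iexp (u * Z \<omega> $ i))"
    using abs_w_le_1 by (intro integrable_const_bound[where B=1]) (auto simp: norm_mult)
  moreover have "integrable M (\<lambda>\<omega>. iexp (u * Z \<omega> $ i))"
    using integrable_iexp_shift[of u i 0] by simp
  ultimately have "(\<integral>\<omega>. (2 + w (t \<bullet> Z \<omega>)) *\<^sub>R iexp (u * Z \<omega> $ i) \<partial>M)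
      = 2 *\<^sub>R (\<integral>\<omega>. iexp (u * Z \<omega> $ i) \<partial>M) + (\<integral>\<omega>. w (t \<bullet> Z \<omega>) *\<^sub>R iexp (u * Z \<omega> $ i) \<partial>M)"
    by (simp only: scaleR_add_left Bochner_Integration.integral_add integrable_scaleR_right
        integral_scaleR_right)
  then show ?thesis
    using char_shift_component[of 0 i u] by (simp add: scaleR_conv_of_real)
qed

lemma real_distribution_weighted_component:
  "real_distribution (weighted_law M (\<lambda>\<omega>. 2 + w (t \<bullet> Z \<omega>)) (\<lambda>\<omega>. Z \<omega> $ i))"
  using weight_bounds(1) integrable_weight expectation_weight_pos
  by (intro real_distribution_weighted_law) auto

lemma char_weighted_component:
  "char (weighted_law M (\<lambda>\<omega>. 2 + w (t \<bullet> Z \<omega>)) (\<lambda>\<omega>. Z \<omega> $ i)) u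
    = (2 * \<phi> (u\<^sup>2) + (\<integral>\<omega>. w (t \<bullet> Z \<omega>) *\<^sub>R iexp (u * Z \<omega> $ i) \<partial>M))
      /\<^sub>R (\<integral>\<omega>. 2 + w (t \<bullet> Z \<omega>) \<partial>M)"
proof -
  have "char (weighted_law M (\<lambda>\<omega>. 2 + w (t \<bullet> Z \<omega>)) (\<lambda>\<omega>. Z \<omega> $ i)) u
      = (\<integral>\<omega>. (2 + w (t \<bullet> Z \<omega>)) *\<^sub>R iexp (u * Z \<omega> $ i) \<partial>M) /\<^sub>R (\<integral>\<omega>. 2 + w (t \<bullet> Z \<omega>) \<partial>M)"
    using weight_bounds(1) integrable_weight expectation_weight_pos
    by (intro char_weighted_law) auto
  then show ?thesis
    by (simp only: integral_weight_iexp)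
qed

lemma integral_weighted_component:
  fixes g :: "real \<Rightarrow> real" and K :: real
  assumes [measurable]: "g \<in> borel_measurable borel" and g_bound: "\<And>x. \<bar>g x\<bar> \<le> K"
  shows "integral\<^sup>L (weighted_law M (\<lambda>\<omega>. 2 + w (t \<bullet> Z \<omega>)) (\<lambda>\<omega>. Z \<omega> $ i)) g
    = (2 * (\<integral>\<omega>. g (Z \<omega> $ i) \<partial>M) + (\<integral>\<omega>. w (t \<bullet> Z \<omega>) * g (Z \<omega> $ i) \<partial>M))
      / (\<integral>\<omega>. 2 + w (t \<bullet> Z \<omega>) \<partial>M)"
proof -
  have "integrable M (\<lambda>\<omega>. g (Z \<omega> $ i))"
    using g_bound by (intro integrable_const_bound[where B=K] AE_I2) auto
  moreover have "integrable M (\<lambda>\<omega>. w (t \<bullet> Z \<omega>) * g (Z \<omega> $ i))"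
    using mult_mono[OF abs_w_le_1 g_bound]
    by (intro integrable_const_bound[where B=K] AE_I2) (auto simp: abs_mult)
  moreover have "integral\<^sup>L (weighted_law M (\<lambda>\<omega>. 2 + w (t \<bullet> Z \<omega>)) (\<lambda>\<omega>. Z \<omega> $ i)) g
      = (\<integral>\<omega>. (2 + w (t \<bullet> Z \<omega>)) * g (Z \<omega> $ i) \<partial>M) / (\<integral>\<omega>. 2 + w (t \<bullet> Z \<omega>) \<partial>M)"
    using weight_bounds(1) integrable_weight expectation_weight_pos
    by (subst integral_weighted_law) (auto simp: divide_inverse_commute)
  ultimately show ?thesis
    by (simp add: distrib_right)
qed

end

lemma expectation_cos_weight_eq:
  assumes "t $ i = 0" "t' $ j = 0" "t \<bullet> t = t' \<bullet> t'"
  shows "(\<integral>\<omega>. 2 + cos (t \<bullet> Z \<omega>) \<partial>M) = (\<integral>\<omega>. 2 + cos (t' \<bullet> Z \<omega>) \<partial>M)"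
proof -
  have "(\<integral>\<omega>. cos (t \<bullet> Z \<omega>) \<partial>M) = (\<integral>\<omega>. cos (t' \<bullet> Z \<omega>) \<partial>M)"
    using integral_cos_inner[OF assms(1)] integral_cos_inner[OF assms(2)] assms(3)
    by (metis of_real_eq_iff)
  then show ?thesis
    by (simp add: Bochner_Integration.integral_add integrable_const_bound[where B=1])
qed

lemma weighted_law_cos_eq:
  assumes "t $ i = 0" "t' $ j = 0" "t \<bullet> t = t' \<bullet> t'"
  shows "weighted_law M (\<lambda>\<omega>. 2 + cos (t \<bullet> Z \<omega>)) (\<lambda>\<omega>. Z \<omega> $ i)
    = weighted_law M (\<lambda>\<omega>. 2 + cos (t' \<bullet> Z \<omega>)) (\<lambda>\<omega>. Z \<omega> $ j)"
proof (intro Levy_uniqueness real_distribution_weighted_component ext)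
  note mass = expectation_cos_weight_eq[OF assms]
  show "char (weighted_law M (\<lambda>\<omega>. 2 + cos (t \<bullet> Z \<omega>)) (\<lambda>\<omega>. Z \<omega> $ i)) u
      = char (weighted_law M (\<lambda>\<omega>. 2 + cos (t' \<bullet> Z \<omega>)) (\<lambda>\<omega>. Z \<omega> $ j)) u" for u
    by (simp only: char_weighted_component[OF borel_measurable_cos abs_cos_le_one] mass
        integral_cos_inner_iexp[OF assms(1)] integral_cos_inner_iexp[OF assms(2)] assms(3))
qed (simp_all add: abs_cos_le_one)

lemma expectation_sin_weight:
  assumes "t $ i = 0"
  shows "(\<integral>\<omega>. 2 + sin (t \<bullet> Z \<omega>) \<partial>M) = 2"
  using integral_sin_inner[OF assms]
  by (simp add: Bochner_Integration.integral_add integrable_const_bound[where B=1] prob_space)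

lemma weighted_law_sin_eq:
  assumes "t $ i = 0"
  shows "weighted_law M (\<lambda>\<omega>. 2 + sin (t \<bullet> Z \<omega>)) (\<lambda>\<omega>. Z \<omega> $ i) = distr M borel (\<lambda>\<omega>. Z \<omega> $ i)"
proof (intro Levy_uniqueness real_distribution_weighted_component real_distribution_distr ext)
  note mass = expectation_sin_weight[OF assms]
  show "char (weighted_law M (\<lambda>\<omega>. 2 + sin (t \<bullet> Z \<omega>)) (\<lambda>\<omega>. Z \<omega> $ i)) u
      = char (distr M borel (\<lambda>\<omega>. Z \<omega> $ i)) u" for u
    by (simp only: char_weighted_component[OF borel_measurable_sin abs_sin_le_one] mass
        integral_sin_inner_iexp[OF assms] char_distr_component) simp
qed (simp_all add: abs_sin_le_one)

context
  fixes g :: "real \<Rightarrow> real" and K :: real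
  assumes measurable_g [measurable]: "g \<in> borel_measurable borel"
    and abs_g_le: "\<And>x. \<bar>g x\<bar> \<le> K"
begin

lemma integral_cos_inner_mult_eq:
  assumes "t $ i = 0" "t' $ j = 0" "t \<bullet> t = t' \<bullet> t'"
  shows "(\<integral>\<omega>. cos (t \<bullet> Z \<omega>) * g (Z \<omega> $ i) \<partial>M) = (\<integral>\<omega>. cos (t' \<bullet> Z \<omega>) * g (Z \<omega> $ j) \<partial>M)"
proof -
  have "integral\<^sup>L (weighted_law M (\<lambda>\<omega>. 2 + cos (t \<bullet> Z \<omega>)) (\<lambda>\<omega>. Z \<omega> $ i)) g
      = integral\<^sup>L (weighted_law M (\<lambda>\<omega>. 2 + cos (t' \<bullet> Z \<omega>)) (\<lambda>\<omega>. Z \<omega> $ j)) g"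
    by (simp only: weighted_law_cos_eq[OF assms])
  then show ?thesis
    using expectation_cos_weight_eq[OF assms] integral_component_eq[OF measurable_g, of i j]
      expectation_weight_pos[OF borel_measurable_cos abs_cos_le_one, of t]
    by (simp add: integral_weighted_component[OF borel_measurable_cos abs_cos_le_one measurable_g abs_g_le])
qed

lemma integral_sin_inner_mult_eq_0:
  assumes "t $ i = 0"
  shows "(\<integral>\<omega>. sin (t \<bullet> Z \<omega>) * g (Z \<omega> $ i) \<partial>M) = 0"
proof -
  have "integral\<^sup>L (weighted_law M (\<lambda>\<omega>. 2 + sin (t \<bullet> Z \<omega>)) (\<lambda>\<omega>. Z \<omega> $ i)) g
      = (\<integral>\<omega>. g (Z \<omega> $ i) \<partial>M)"
    by (simp add: weighted_law_sin_eq[OF assms] integral_distr)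
  then show ?thesis
    using expectation_sin_weight[OF assms]
    by (simp add: integral_weighted_component[OF borel_measurable_sin abs_sin_le_one measurable_g abs_g_le])
qed

end

lemma measure_component_eq:
  assumes "A \<in> sets borel"
  shows "measure M {\<omega>\<in>space M. Z \<omega> $ i \<in> A} = measure M {\<omega>\<in>space M. Z \<omega> $ j \<in> A}"
  using integral_component_eq[of "indicator A" i j] assms
  by (simp add: integral_indicator_comp)

lemma quantile_component_eq:
  "quantile M (\<lambda>\<omega>. Z \<omega> $ i) p = quantile M (\<lambda>\<omega>. Z \<omega> $ j) p"
  using measure_component_eq[of "{..x}" i j for x] by (simp add: quantile_def)

lemma central_event_affine:
  assumes Y: "\<And>\<omega>. Y \<omega> = (\<chi> k. \<nu> $ k + \<sigma> k * Z \<omega> $ k)" and \<sigma>: "0 < \<sigma> i" and \<alpha>: "0 < \<alpha>" "\<alpha> < 1"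
  shows "{\<omega>\<in>space M. Y \<omega> $ i \<in> central_interval M (\<lambda>\<omega>. Y \<omega> $ i) \<alpha>}
    = {\<omega>\<in>space M. Z \<omega> $ i \<in> central_interval M (\<lambda>\<omega>. Z \<omega> $ j) \<alpha>}"
proof -
  have "quantile M (\<lambda>\<omega>. Y \<omega> $ i) p = \<nu> $ i + \<sigma> i * quantile M (\<lambda>\<omega>. Z \<omega> $ j) p"
    if "0 < p" "p < 1" for p
    using quantile_affine[OF measurable_component that \<sigma>, of "\<nu> $ i"] quantile_component_eq[of i p j]
    by (simp add: Y)
  then have "central_interval M (\<lambda>\<omega>. Y \<omega> $ i) \<alpha>
      = {\<nu> $ i + \<sigma> i * quantile M (\<lambda>\<omega>. Z \<omega> $ j) (\<alpha> / 2) .. \<nu> $ i + \<sigma> i * quantile M (\<lambda>\<omega>. Z \<omega> $ j) (1 - \<alpha> / 2)}"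
    using \<alpha> by (simp add: central_interval_def)
  then show ?thesis
    using \<sigma> by (auto simp: Y central_interval_def)
qed

end

locale spherical_L2 = spherical +
  assumes integrable_norm_sq: "integrable M (\<lambda>\<omega>. (norm (Z \<omega>))\<^sup>2)"
begin

lemma integrable_inner_sq: "integrable M (\<lambda>\<omega>. (t \<bullet> Z \<omega>)\<^sup>2)"
proof (rule Bochner_Integration.integrable_bound)
  show "integrable M (\<lambda>\<omega>. (norm t)\<^sup>2 * (norm (Z \<omega>))\<^sup>2)"
    using integrable_norm_sq by simp
  show "AE \<omega> in M. norm ((t \<bullet> Z \<omega>)\<^sup>2) \<le> norm ((norm t)\<^sup>2 * (norm (Z \<omega>))\<^sup>2)"
    using Cauchy_Schwarz_ineq[of t "Z _"] by (intro AE_I2) (simp add: power2_norm_eq_inner)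
qed measurable

lemma integrable_inner: "integrable M (\<lambda>\<omega>. t \<bullet> Z \<omega>)"
  by (rule square_integrable_imp_integrable[OF _ integrable_inner_sq]) measurable

lemma integrable_component: "integrable M (\<lambda>\<omega>. Z \<omega> $ j)"
  using integrable_inner[of "axis j 1"] by (simp add: inner_axis')

lemma integrable_component_sq: "integrable M (\<lambda>\<omega>. (Z \<omega> $ j)\<^sup>2)"
  using integrable_inner_sq[of "axis j 1"] by (simp add: inner_axis')

(* The identities for weighted laws are differentiated at t = 0 through the dominated
   approximations n sin (x / n) \<longrightarrow> x and 2 n^2 (1 - cos (x / n)) \<longrightarrow> x^2. *)
context
  fixes g :: "real \<Rightarrow> real" and K :: real
  assumes measurable_g [measurable]: "g \<in> borel_measurable borel"
    and abs_g_le: "\<And>x. \<bar>g x\<bar> \<le> K"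
begin

lemma integral_mult_inner_eq_0:
  assumes "t $ i = 0"
  shows "(\<integral>\<omega>. g (Z \<omega> $ i) * (t \<bullet> Z \<omega>) \<partial>M) = 0"
proof -
  have "(\<integral>\<omega>. g (Z \<omega> $ i) * (real (Suc n) * sin (t \<bullet> Z \<omega> / real (Suc n))) \<partial>M) = 0" for n
  proof -
    let ?s = "(1 / real (Suc n)) *\<^sub>R t"
    have "(\<integral>\<omega>. g (Z \<omega> $ i) * (real (Suc n) * sin (t \<bullet> Z \<omega> / real (Suc n))) \<partial>M)
        = real (Suc n) * (\<integral>\<omega>. sin (?s \<bullet> Z \<omega>) * g (Z \<omega> $ i) \<partial>M)"
      by (simp add: ac_simps)
    also have "\<dots> = 0"
      using integral_sin_inner_mult_eq_0[OF measurable_g abs_g_le, of ?s i] assms by simp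
    finally show ?thesis .
  qed
  moreover have "(\<lambda>n. \<integral>\<omega>. g (Z \<omega> $ i) * (real (Suc n) * sin (t \<bullet> Z \<omega> / real (Suc n))) \<partial>M)
      \<longlonglongrightarrow> (\<integral>\<omega>. g (Z \<omega> $ i) * (t \<bullet> Z \<omega>) \<partial>M)"
  proof (rule tendsto_integral_bounded_mult[where q="\<lambda>n x. real (Suc n) * sin (x / real (Suc n))"
        and f="\<lambda>x. x" and U="\<lambda>\<omega>. Z \<omega> $ i" and V="\<lambda>\<omega>. t \<bullet> Z \<omega>" and K=K])
    show "\<bar>real (Suc n) * sin (x / real (Suc n))\<bar> \<le> \<bar>x\<bar>" for n x
      by (rule abs_scaled_sin_le) simp
  qed (simp_all add: abs_g_le tendsto_scaled_sin integrable_inner del: of_nat_Suc)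
  ultimately show ?thesis
    by (simp add: LIMSEQ_const_iff)
qed

lemma integrable_bounded_component: "integrable M (\<lambda>\<omega>. g (Z \<omega> $ i))"
  using abs_g_le by (intro integrable_const_bound[where B=K] AE_I2) auto

lemma integrable_cos_mult_bounded_component: "integrable M (\<lambda>\<omega>. cos (t \<bullet> Z \<omega>) * g (Z \<omega> $ i))"
  using mult_mono[OF abs_cos_le_one abs_g_le]
  by (intro integrable_const_bound[where B=K] AE_I2) (auto simp: abs_mult)

lemma integral_mult_inner_sq_eq:
  assumes "t $ i = 0" "t' $ j = 0" "t \<bullet> t = t' \<bullet> t'"
  shows "(\<integral>\<omega>. g (Z \<omega> $ i) * (t \<bullet> Z \<omega>)\<^sup>2 \<partial>M) = (\<integral>\<omega>. g (Z \<omega> $ j) * (t' \<bullet> Z \<omega>)\<^sup>2 \<partial>M)"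
proof -
  define A where "A s k n = (\<integral>\<omega>. g (Z \<omega> $ k) * (2 * (real (Suc n))\<^sup>2 * (1 - cos (s \<bullet> Z \<omega> / real (Suc n)))) \<partial>M)"
    for s k n
  have A_eq: "A s k n = 2 * (real (Suc n))\<^sup>2 * ((\<integral>\<omega>. g (Z \<omega> $ k) \<partial>M)
      - (\<integral>\<omega>. cos (((1 / real (Suc n)) *\<^sub>R s) \<bullet> Z \<omega>) * g (Z \<omega> $ k) \<partial>M))" for s k n
  proof -
    have "A s k n = (\<integral>\<omega>. 2 * (real (Suc n))\<^sup>2 * (g (Z \<omega> $ k)
        - cos (((1 / real (Suc n)) *\<^sub>R s) \<bullet> Z \<omega>) * g (Z \<omega> $ k)) \<partial>M)"
      unfolding A_def by (rule Bochner_Integration.integral_cong) (simp_all add: algebra_simps)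
    then show ?thesis
      by (simp only: integral_mult_right_zero Bochner_Integration.integral_diff[OF
            integrable_bounded_component integrable_cos_mult_bounded_component])
  qed
  have lim: "(\<lambda>n. A s k n) \<longlonglongrightarrow> (\<integral>\<omega>. g (Z \<omega> $ k) * (s \<bullet> Z \<omega>)\<^sup>2 \<partial>M)" for s k
    unfolding A_def
  proof (rule tendsto_integral_bounded_mult[where q="\<lambda>n x. 2 * (real (Suc n))\<^sup>2 * (1 - cos (x / real (Suc n)))"
        and f="\<lambda>x. x\<^sup>2" and U="\<lambda>\<omega>. Z \<omega> $ k" and V="\<lambda>\<omega>. s \<bullet> Z \<omega>" and K=K])
    show "\<bar>2 * (real (Suc n))\<^sup>2 * (1 - cos (x / real (Suc n)))\<bar> \<le> \<bar>x\<^sup>2\<bar>" for n x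
      by (rule abs_scaled_versine_le)
  qed (simp_all add: abs_g_le tendsto_scaled_versine integrable_inner_sq del: of_nat_Suc)
  have "A t i n = A t' j n" for n
    using assms integral_component_eq[OF measurable_g, of i j]
      integral_cos_inner_mult_eq[OF measurable_g abs_g_le,
        of "(1 / real (Suc n)) *\<^sub>R t" i "(1 / real (Suc n)) *\<^sub>R t'" j]
    by (simp add: A_eq)
  then have "A t i = A t' j" ..
  then show ?thesis
    using LIMSEQ_unique[OF lim[of t i]] lim[of t' j] by simp
qed

lemma integrable_bounded_mult_inner_sq: "integrable M (\<lambda>\<omega>. g (Z \<omega> $ i) * (t \<bullet> Z \<omega>)\<^sup>2)"
proof (rule Bochner_Integration.integrable_bound[OF integrable_mult_right[OF integrable_inner_sq]])
  show "AE \<omega> in M. norm (g (Z \<omega> $ i) * (t \<bullet> Z \<omega>)\<^sup>2) \<le> norm (K * (t \<bullet> Z \<omega>)\<^sup>2)"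
    using abs_g_le order_trans[OF abs_ge_zero abs_g_le]
    by (intro AE_I2) (simp add: abs_mult mult_right_mono)
qed measurable

lemma integral_mult_component_eq_0:
  assumes "i \<noteq> j"
  shows "(\<integral>\<omega>. g (Z \<omega> $ i) * Z \<omega> $ j \<partial>M) = 0"
  using integral_mult_inner_eq_0[OF axis_nth_other[OF assms]] by (simp add: inner_axis')

lemma integral_mult_component_sq_eq:
  assumes "i \<noteq> j" "i' \<noteq> j'"
  shows "(\<integral>\<omega>. g (Z \<omega> $ i) * (Z \<omega> $ j)\<^sup>2 \<partial>M) = (\<integral>\<omega>. g (Z \<omega> $ i') * (Z \<omega> $ j')\<^sup>2 \<partial>M)"
  using integral_mult_inner_sq_eq[OF axis_nth_other[OF assms(1)] axis_nth_other[OF assms(2)]]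
  by (simp add: inner_axis' inner_axis_axis)

lemma integral_mult_components_eq_0:
  assumes "i \<noteq> j" "i \<noteq> k" "j \<noteq> k"
  shows "(\<integral>\<omega>. g (Z \<omega> $ i) * (Z \<omega> $ j * Z \<omega> $ k) \<partial>M) = 0"
proof -
  define p where "p = axis j (1::real) + axis k 1"
  define q where "q = axis j (1::real) - axis k 1"
  have "(\<integral>\<omega>. g (Z \<omega> $ i) * (Z \<omega> $ j * Z \<omega> $ k) \<partial>M)
      = (\<integral>\<omega>. (g (Z \<omega> $ i) * (p \<bullet> Z \<omega>)\<^sup>2 - g (Z \<omega> $ i) * (q \<bullet> Z \<omega>)\<^sup>2) / 4 \<partial>M)"
    by (rule Bochner_Integration.integral_cong)
       (simp_all add: p_def q_def inner_add_left inner_diff_left inner_axis' power2_eq_square algebra_simps)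
  also have "\<dots> = ((\<integral>\<omega>. g (Z \<omega> $ i) * (p \<bullet> Z \<omega>)\<^sup>2 \<partial>M) - (\<integral>\<omega>. g (Z \<omega> $ i) * (q \<bullet> Z \<omega>)\<^sup>2 \<partial>M)) / 4"
    by (simp only: integral_divide_zero Bochner_Integration.integral_diff[OF
          integrable_bounded_mult_inner_sq integrable_bounded_mult_inner_sq])
  also have "\<dots> = 0"
    using assms axis_nth_other[of i j] axis_nth_other[of i k]
      integral_mult_inner_sq_eq[of p i q i]
    by (simp add: p_def q_def inner_add_left inner_add_right inner_diff_left inner_diff_right inner_axis_axis)
  finally show ?thesis .
qed

end

end

section \<open>Conditioning on a slab\<close>

lemma abs_indicator_interval_mult_le:
  fixes x c :: real
  shows "\<bar>indicator {l..u} x * (x - c)\<bar> \<le> \<bar>l\<bar> + \<bar>u\<bar> + \<bar>c\<bar>"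
  by (auto simp: indicator_def)

(* i0 and j0 are reference components: by sphericity the slab statistics below are the same
   for every conditioning component i and every other component j. *)
locale spherical_slab = spherical_L2 M Z \<phi> for M :: "'a measure" and Z :: "'a \<Rightarrow> real^'d" and \<phi> +
  fixes l u :: real and i0 j0 :: 'd
  assumes i0_ne_j0: "i0 \<noteq> j0"
    and slab_nonnull: "0 < measure M {\<omega>\<in>space M. Z \<omega> $ i0 \<in> {l..u}}"
begin

definition "slab_prob = measure M {\<omega>\<in>space M. Z \<omega> $ i0 \<in> {l..u}}"

definition "slab_mean = (\<integral>\<omega>. indicator {l..u} (Z \<omega> $ i0) * Z \<omega> $ i0 \<partial>M) / slab_prob"

definition "slab_var = (\<integral>\<omega>. indicator {l..u} (Z \<omega> $ i0) * (Z \<omega> $ i0 - slab_mean)\<^sup>2 \<partial>M) / slab_prob"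

definition "slab_var_other = (\<integral>\<omega>. indicator {l..u} (Z \<omega> $ i0) * (Z \<omega> $ j0)\<^sup>2 \<partial>M) / slab_prob"

lemma slab_prob_pos: "0 < slab_prob"
  using slab_nonnull by (simp add: slab_prob_def)

lemma measure_slab: "measure M {\<omega>\<in>space M. Z \<omega> $ i \<in> {l..u}} = slab_prob"
  unfolding slab_prob_def by (rule measure_component_eq) simp

lemma integral_indicator_slab: "(\<integral>\<omega>. indicator {l..u} (Z \<omega> $ i) \<partial>M) = slab_prob"
  by (simp only: integral_indicator_comp[OF measurable_component atLeastAtMost_borel] measure_slab)

lemma cond_exp_slab:
  "cond_exp_event M {\<omega>\<in>space M. Z \<omega> $ i \<in> {l..u}} f
    = (\<integral>\<omega>. indicator {l..u} (Z \<omega> $ i) * f \<omega> \<partial>M) / slab_prob"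
proof -
  have "(\<integral>\<omega>. indicator {\<omega>\<in>space M. Z \<omega> $ i \<in> {l..u}} \<omega> * f \<omega> \<partial>M)
      = (\<integral>\<omega>. indicator {l..u} (Z \<omega> $ i) * f \<omega> \<partial>M)"
    by (rule Bochner_Integration.integral_cong) (auto simp: indicator_def)
  then show ?thesis
    by (simp only: cond_exp_event_def measure_slab)
qed

lemma integral_slab_mult_component:
  "(\<integral>\<omega>. indicator {l..u} (Z \<omega> $ i) * Z \<omega> $ j \<partial>M) = (if j = i then slab_mean * slab_prob else 0)"
proof (cases "j = i")
  case True
  have "(\<integral>\<omega>. indicator {l..u} (Z \<omega> $ i) * Z \<omega> $ i \<partial>M) = (\<integral>\<omega>. indicator {l..u} (Z \<omega> $ i0) * Z \<omega> $ i0 \<partial>M)"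
    by (rule integral_component_eq[where g="\<lambda>x. indicator {l..u} x * x"]) simp
  then show ?thesis
    using True slab_prob_pos by (simp add: slab_mean_def)
next
  case False
  then show ?thesis
    using integral_mult_component_eq_0[where g="indicator {l..u}" and K=1] by simp
qed

lemma integral_slab_centered_products:
  "(\<integral>\<omega>. indicator {l..u} (Z \<omega> $ i)
      * ((Z \<omega> $ j - (if j = i then slab_mean else 0)) * (Z \<omega> $ k - (if k = i then slab_mean else 0))) \<partial>M)
    = (if j = k then (if j = i then slab_var else slab_var_other) * slab_prob else 0)"
proof -
  note bound = abs_indicator_interval_mult_le[of l u _ slab_mean]
  consider "j = k" "j = i" | "j = k" "j \<noteq> i" | "j \<noteq> k" "j = i" | "j \<noteq> k" "k = i"
    | "j \<noteq> k" "j \<noteq> i" "k \<noteq> i"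
    by blast
  then show ?thesis
  proof cases
    case 1
    have "(\<integral>\<omega>. indicator {l..u} (Z \<omega> $ i) * (Z \<omega> $ i - slab_mean)\<^sup>2 \<partial>M)
        = (\<integral>\<omega>. indicator {l..u} (Z \<omega> $ i0) * (Z \<omega> $ i0 - slab_mean)\<^sup>2 \<partial>M)"
      by (rule integral_component_eq[where g="\<lambda>x. indicator {l..u} x * (x - slab_mean)\<^sup>2"]) simp
    then show ?thesis
      using 1 slab_prob_pos by (simp add: slab_var_def power2_eq_square)
  next
    case 2
    have "(\<integral>\<omega>. indicator {l..u} (Z \<omega> $ i) * (Z \<omega> $ j)\<^sup>2 \<partial>M)
        = (\<integral>\<omega>. indicator {l..u} (Z \<omega> $ i0) * (Z \<omega> $ j0)\<^sup>2 \<partial>M)"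
      using 2 i0_ne_j0 by (intro integral_mult_component_sq_eq[where K=1]) auto
    then show ?thesis
      using 2 slab_prob_pos by (simp add: slab_var_other_def power2_eq_square)
  next
    case 3
    have "(\<integral>\<omega>. indicator {l..u} (Z \<omega> $ i) * (Z \<omega> $ i - slab_mean) * Z \<omega> $ k \<partial>M) = 0"
      using 3 bound by (intro integral_mult_component_eq_0) auto
    then show ?thesis
      using 3 by (simp add: mult.assoc)
  next
    case 4
    have "(\<integral>\<omega>. indicator {l..u} (Z \<omega> $ i) * (Z \<omega> $ i - slab_mean) * Z \<omega> $ j \<partial>M) = 0"
      using 4 bound by (intro integral_mult_component_eq_0) auto
    then show ?thesis
      using 4 by (simp add: ac_simps)
  next
    case 5
    have "(\<integral>\<omega>. indicator {l..u} (Z \<omega> $ i) * (Z \<omega> $ j * Z \<omega> $ k) \<partial>M) = 0"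
      using 5 by (intro integral_mult_components_eq_0[where K=1]) auto
    then show ?thesis
      using 5 by simp
  qed
qed

lemma integrable_indicator_slab: "integrable M (\<lambda>\<omega>. indicator {l..u} (Z \<omega> $ i) :: real)"
  by (intro integrable_const_bound[where B=1] AE_I2) auto

lemma integrable_slab_mult_component: "integrable M (\<lambda>\<omega>. indicator {l..u} (Z \<omega> $ i) * Z \<omega> $ j)"
  by (rule Bochner_Integration.integrable_bound[OF integrable_component]) (auto simp: indicator_def)

context
  fixes Y :: "'a \<Rightarrow> real^'d" and \<nu> :: "real^'d" and \<sigma> :: "'d \<Rightarrow> real"
  assumes Y: "\<And>\<omega>. Y \<omega> = (\<chi> k. \<nu> $ k + \<sigma> k * Z \<omega> $ k)"
begin

lemma cond_exp_slab_affine: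
  "cond_exp_event M {\<omega>\<in>space M. Z \<omega> $ i \<in> {l..u}} (\<lambda>\<omega>. Y \<omega> $ j)
    = \<nu> $ j + \<sigma> j * (if j = i then slab_mean else 0)"
proof -
  have "(\<integral>\<omega>. indicator {l..u} (Z \<omega> $ i) * Y \<omega> $ j \<partial>M)
      = (\<integral>\<omega>. \<nu> $ j * indicator {l..u} (Z \<omega> $ i) + \<sigma> j * (indicator {l..u} (Z \<omega> $ i) * Z \<omega> $ j) \<partial>M)"
    by (rule Bochner_Integration.integral_cong) (simp_all add: Y algebra_simps)
  also have "\<dots> = \<nu> $ j * (\<integral>\<omega>. indicator {l..u} (Z \<omega> $ i) \<partial>M)
      + \<sigma> j * (\<integral>\<omega>. indicator {l..u} (Z \<omega> $ i) * Z \<omega> $ j \<partial>M)"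
    by (simp only: Bochner_Integration.integral_add[OF integrable_mult_right integrable_mult_right]
        integrable_indicator_slab integrable_slab_mult_component integral_mult_right_zero)
  also have "\<dots> = (\<nu> $ j + \<sigma> j * (if j = i then slab_mean else 0)) * slab_prob"
    unfolding integral_indicator_slab integral_slab_mult_component by (simp add: algebra_simps)
  finally show ?thesis
    unfolding cond_exp_slab using slab_prob_pos by simp
qed

lemma cond_cov_slab:
  "cond_cov_matrix M {\<omega>\<in>space M. Z \<omega> $ i \<in> {l..u}} Y
    = spiked_diag (\<lambda>k. (\<sigma> k)\<^sup>2) slab_var_other slab_var i"
proof -
  have "cond_cov_matrix M {\<omega>\<in>space M. Z \<omega> $ i \<in> {l..u}} Y $ j $ k
      = (\<sigma> j * \<sigma> k) * (\<integral>\<omega>. indicator {l..u} (Z \<omega> $ i)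
          * ((Z \<omega> $ j - (if j = i then slab_mean else 0)) * (Z \<omega> $ k - (if k = i then slab_mean else 0))) \<partial>M)
        / slab_prob" for j k
  proof -
    have "(\<integral>\<omega>. indicator {l..u} (Z \<omega> $ i)
          * ((Y \<omega> $ j - (\<nu> $ j + \<sigma> j * (if j = i then slab_mean else 0)))
            * (Y \<omega> $ k - (\<nu> $ k + \<sigma> k * (if k = i then slab_mean else 0)))) \<partial>M)
        = (\<integral>\<omega>. (\<sigma> j * \<sigma> k) * (indicator {l..u} (Z \<omega> $ i)
          * ((Z \<omega> $ j - (if j = i then slab_mean else 0)) * (Z \<omega> $ k - (if k = i then slab_mean else 0)))) \<partial>M)"
      by (rule Bochner_Integration.integral_cong) (simp_all add: Y algebra_simps)
    then show ?thesis
      unfolding cond_cov_matrix_def vec_lambda_beta cond_exp_slab_affine cond_exp_slab by simp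
  qed
  then show ?thesis
    using slab_prob_pos
    by (simp add: vec_eq_iff spiked_diag_def diag_matrix_def integral_slab_centered_products
        power2_eq_square)
qed

end

lemma slab_var_nonneg: "0 \<le> slab_var"
  unfolding slab_var_def using slab_prob_pos
  by (intro divide_nonneg_pos integral_nonneg_AE) (auto simp: indicator_def)

lemma integrable_slab_mult_component_sq: "integrable M (\<lambda>\<omega>. indicator {l..u} (Z \<omega> $ i) * (Z \<omega> $ j)\<^sup>2)"
  by (rule Bochner_Integration.integrable_bound[OF integrable_component_sq]) (auto simp: indicator_def)

lemma slab_var_le_second_moment:
  "slab_var * slab_prob \<le> (\<integral>\<omega>. indicator {l..u} (Z \<omega> $ i0) * (Z \<omega> $ i0)\<^sup>2 \<partial>M)"
proof -
  have "(\<integral>\<omega>. indicator {l..u} (Z \<omega> $ i0) * (Z \<omega> $ i0 - slab_mean)\<^sup>2 \<partial>M)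
      = (\<integral>\<omega>. indicator {l..u} (Z \<omega> $ i0) * (Z \<omega> $ i0)\<^sup>2
          - 2 * slab_mean * (indicator {l..u} (Z \<omega> $ i0) * Z \<omega> $ i0)
          + slab_mean\<^sup>2 * indicator {l..u} (Z \<omega> $ i0) \<partial>M)"
    by (rule Bochner_Integration.integral_cong) (simp_all add: power2_eq_square algebra_simps)
  also have "\<dots> = (\<integral>\<omega>. indicator {l..u} (Z \<omega> $ i0) * (Z \<omega> $ i0)\<^sup>2 \<partial>M) - slab_mean\<^sup>2 * slab_prob"
    using integrable_slab_mult_component_sq integrable_slab_mult_component integrable_indicator_slab
    by (simp add: integral_indicator_slab integral_slab_mult_component power2_eq_square)
  finally show ?thesis
    using slab_prob_pos by (simp add: slab_var_def)
qed

(* The correction term r (1[Z_i0 \<in> [l,u]] - 1[Z_j0 \<in> [l,u]]) has mean zero because Z_i0 and Z_j0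
   have the same law; pointwise it uses Z_j0^2 <= r inside [l,u] and r <= Z_j0^2 outside. *)
lemma slab_second_moment_le_other:
  assumes inside: "\<And>x. x \<in> {l..u} \<Longrightarrow> x\<^sup>2 \<le> r"
    and outside: "AE \<omega> in M. Z \<omega> $ j0 \<notin> {l..u} \<longrightarrow> r \<le> (Z \<omega> $ j0)\<^sup>2"
  shows "(\<integral>\<omega>. indicator {l..u} (Z \<omega> $ i0) * (Z \<omega> $ i0)\<^sup>2 \<partial>M)
    \<le> (\<integral>\<omega>. indicator {l..u} (Z \<omega> $ i0) * (Z \<omega> $ j0)\<^sup>2 \<partial>M)"
proof -
  let ?I = "\<lambda>k \<omega>. indicator {l..u} (Z \<omega> $ k) :: real"
  have "(\<integral>\<omega>. ?I i0 \<omega> * (Z \<omega> $ i0)\<^sup>2 \<partial>M) = (\<integral>\<omega>. ?I j0 \<omega> * (Z \<omega> $ j0)\<^sup>2 \<partial>M)"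
    by (rule integral_component_eq[where g="\<lambda>x. indicator {l..u} x * x\<^sup>2"]) simp
  also have "\<dots> = (\<integral>\<omega>. ?I j0 \<omega> * (Z \<omega> $ j0)\<^sup>2 + r * (?I i0 \<omega> - ?I j0 \<omega>) \<partial>M)"
    using integrable_slab_mult_component_sq integrable_indicator_slab
    by (simp add: integral_indicator_slab)
  also have "\<dots> \<le> (\<integral>\<omega>. ?I i0 \<omega> * (Z \<omega> $ j0)\<^sup>2 \<partial>M)"
  proof (rule integral_mono_AE)
    show "integrable M (\<lambda>\<omega>. ?I j0 \<omega> * (Z \<omega> $ j0)\<^sup>2 + r * (?I i0 \<omega> - ?I j0 \<omega>))"
      using integrable_slab_mult_component_sq integrable_indicator_slab by simp
    show "AE \<omega> in M. ?I j0 \<omega> * (Z \<omega> $ j0)\<^sup>2 + r * (?I i0 \<omega> - ?I j0 \<omega>) \<le> ?I i0 \<omega> * (Z \<omega> $ j0)\<^sup>2"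
      using outside
    proof (rule AE_mp, intro AE_I2 impI)
      fix \<omega>
      assume "Z \<omega> $ j0 \<notin> {l..u} \<longrightarrow> r \<le> (Z \<omega> $ j0)\<^sup>2"
      then show "?I j0 \<omega> * (Z \<omega> $ j0)\<^sup>2 + r * (?I i0 \<omega> - ?I j0 \<omega>) \<le> ?I i0 \<omega> * (Z \<omega> $ j0)\<^sup>2"
        using inside[of "Z \<omega> $ j0"] by (cases "Z \<omega> $ i0 \<in> {l..u}"; cases "Z \<omega> $ j0 \<in> {l..u}") auto
    qed
  qed (rule integrable_slab_mult_component_sq)
  finally show ?thesis .
qed

lemma slab_var_le_other:
  assumes "\<And>x. x \<in> {l..u} \<Longrightarrow> x\<^sup>2 \<le> r"
    and "AE \<omega> in M. Z \<omega> $ j0 \<notin> {l..u} \<longrightarrow> r \<le> (Z \<omega> $ j0)\<^sup>2"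
  shows "slab_var \<le> slab_var_other"
  using slab_var_le_second_moment slab_second_moment_le_other[OF assms] slab_prob_pos
  by (simp add: slab_var_other_def le_divide_eq)

(* By symmetry of Z_j0 the central interval [l,u] lies in [l,-l] and (u,-l) is a null set. *)
lemma slab_var_le_other_central:
  assumes \<alpha>: "0 < \<alpha>" "\<alpha> < 1"
    and l: "l = quantile M (\<lambda>\<omega>. Z \<omega> $ i0) (\<alpha> / 2)"
    and u: "u = quantile M (\<lambda>\<omega>. Z \<omega> $ i0) (1 - \<alpha> / 2)"
  shows "slab_var \<le> slab_var_other"
proof (rule slab_var_le_other[where r="l\<^sup>2"])
  have l': "l = quantile M (\<lambda>\<omega>. Z \<omega> $ j0) (\<alpha> / 2)" and u': "u = quantile M (\<lambda>\<omega>. Z \<omega> $ j0) (1 - \<alpha> / 2)"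
    unfolding l u by (rule quantile_component_eq)+
  note symmetric = quantile_symmetric[OF measurable_component distr_uminus_component \<alpha>, of j0,
      folded l' u']
  have "l \<le> u"
    using slab_nonnull by (cases "l \<le> u") auto
  then have "l \<le> 0"
    using symmetric(1) by linarith
  show "x\<^sup>2 \<le> l\<^sup>2" if "x \<in> {l..u}" for x
    using that symmetric(1) \<open>l \<le> 0\<close> by (simp add: abs_le_square_iff[symmetric] abs_le_iff)
  have "AE \<omega> in M. \<omega> \<notin> {\<omega>\<in>space M. u < Z \<omega> $ j0 \<and> Z \<omega> $ j0 < - l}"
    using symmetric(2) by (subst prob_eq_0[symmetric]) auto
  then show "AE \<omega> in M. Z \<omega> $ j0 \<notin> {l..u} \<longrightarrow> l\<^sup>2 \<le> (Z \<omega> $ j0)\<^sup>2"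
    using AE_space by eventually_elim (use \<open>l \<le> 0\<close> in \<open>auto simp: abs_le_square_iff[symmetric]\<close>)
qed

end

section \<open>Elliptical random vectors\<close>

lemma inner_matrix_vector_mult_left: "(A *v x) \<bullet> y = x \<bullet> (transpose A *v y)" for A :: "real^'n^'m"
  using dot_lmul_matrix[of x "transpose A" y] by simp

lemma orthogonal_matrix_inner:
  assumes "orthogonal_matrix (V :: real^'n^'n)"
  shows "(V *v x) \<bullet> (V *v y) = x \<bullet> y"
  using assms by (simp add: inner_matrix_vector_mult_left matrix_vector_mul_assoc orthogonal_matrix)

lemma orthogonal_matrix_norm:
  assumes "orthogonal_matrix (V :: real^'n^'n)"
  shows "norm (V *v x) = norm x"
  using orthogonal_matrix_inner[OF assms, of x x] by (simp add: norm_eq_sqrt_inner)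

lemma rotated_component_diff_sq_le:
  assumes "orthogonal_matrix (V :: real^'n^'n)"
  shows "((transpose V *v x) $ k - c)\<^sup>2 \<le> 2 * ((norm x)\<^sup>2 + c\<^sup>2)"
proof -
  have "norm (transpose V *v x) = norm x"
    by (rule orthogonal_matrix_norm) (simp add: assms)
  then have "\<bar>(transpose V *v x) $ k\<bar> \<le> norm x"
    using component_le_norm_cart[of "transpose V *v x" k] by linarith
  then have "((transpose V *v x) $ k)\<^sup>2 \<le> (norm x)\<^sup>2"
    by (metis abs_ge_zero power2_abs power_mono)
  moreover have "(y - c)\<^sup>2 \<le> 2 * (y\<^sup>2 + c\<^sup>2)" for y :: real
    using zero_le_power2[of "y + c"] by (simp add: power2_eq_square algebra_simps)
  ultimately show ?thesis
    by (smt (verit))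
qed

lemma (in prob_space) char_standardized_elliptical:
  fixes X :: "'a \<Rightarrow> real^'d" and V :: "real^'d^'d" and \<sigma> :: "'d \<Rightarrow> real"
  assumes ell: "elliptical M X \<mu> \<Sigma> \<phi>" and V: "orthogonal_matrix V"
    and \<Sigma>: "\<Sigma> = V ** diag_matrix (\<lambda>k. (\<sigma> k)\<^sup>2) ** transpose V" and \<sigma>: "\<And>k. 0 < \<sigma> k"
  shows "(\<integral>\<omega>. iexp (t \<bullet> (\<chi> k. ((transpose V *v X \<omega>) $ k - (transpose V *v \<mu>) $ k) / \<sigma> k)) \<partial>M)
    = \<phi> (t \<bullet> t)"
proof -
  define s where "s = (\<chi> k. t $ k / \<sigma> k)"
  have "t \<bullet> (\<chi> k. ((transpose V *v X \<omega>) $ k - (transpose V *v \<mu>) $ k) / \<sigma> k)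
      = s \<bullet> (transpose V *v X \<omega>) - s \<bullet> (transpose V *v \<mu>)" for \<omega>
    by (simp add: s_def inner_vec_def diff_divide_distrib sum_subtractf[symmetric] algebra_simps)
  also have "\<dots> \<omega> = (V *v s) \<bullet> X \<omega> - (V *v s) \<bullet> \<mu>" for \<omega>
    by (simp add: inner_matrix_vector_mult_left)
  finally have inner_eq: "t \<bullet> (\<chi> k. ((transpose V *v X \<omega>) $ k - (transpose V *v \<mu>) $ k) / \<sigma> k)
      = (V *v s) \<bullet> X \<omega> - (V *v s) \<bullet> \<mu>" for \<omega> .
  have "(\<integral>\<omega>. iexp (t \<bullet> (\<chi> k. ((transpose V *v X \<omega>) $ k - (transpose V *v \<mu>) $ k) / \<sigma> k)) \<partial>M)
      = (\<integral>\<omega>. iexp ((V *v s) \<bullet> X \<omega>) * iexp (- ((V *v s) \<bullet> \<mu>)) \<partial>M)"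
    by (simp only: inner_eq) (simp add: exp_add[symmetric] algebra_simps)
  also have "\<dots> = (\<integral>\<omega>. iexp ((V *v s) \<bullet> X \<omega>) \<partial>M) * iexp (- ((V *v s) \<bullet> \<mu>))"
    by (rule integral_mult_left_zero)
  also have "\<dots> = \<phi> ((V *v s) \<bullet> (\<Sigma> *v (V *v s)))"
    using ell by (simp add: elliptical_def cis_conv_exp exp_minus)
  also have "(V *v s) \<bullet> (\<Sigma> *v (V *v s)) = s \<bullet> (diag_matrix (\<lambda>k. (\<sigma> k)\<^sup>2) *v s)"
  proof -
    have "\<Sigma> ** V = V ** diag_matrix (\<lambda>k. (\<sigma> k)\<^sup>2)"
      using V unfolding \<Sigma> by (simp add: matrix_mul_assoc[symmetric] orthogonal_matrix matrix_mul_rid)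
    then have "\<Sigma> *v (V *v s) = V *v (diag_matrix (\<lambda>k. (\<sigma> k)\<^sup>2) *v s)"
      by (simp only: matrix_vector_mul_assoc)
    then show ?thesis
      by (simp add: orthogonal_matrix_inner[OF V])
  qed
  also have "\<dots> = t \<bullet> t"
    using \<sigma> by (simp add: s_def diag_matrix_mult_vec inner_vec_def power2_eq_square less_imp_neq[symmetric])
  finally show ?thesis .
qed

lemma elliptical_standardized_spherical:
  fixes M :: "'a measure" and X :: "'a \<Rightarrow> real^'d" and V :: "real^'d^'d" and \<sigma> :: "'d \<Rightarrow> real"
  assumes "prob_space M" and measurable_X: "X \<in> borel_measurable M"
    and integrable_X: "integrable M (\<lambda>\<omega>. (norm (X \<omega>))\<^sup>2)"
    and ell: "elliptical M X \<mu> \<Sigma> \<phi>" and V: "orthogonal_matrix V"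
    and \<Sigma>: "\<Sigma> = V ** diag_matrix (\<lambda>k. (\<sigma> k)\<^sup>2) ** transpose V" and \<sigma>: "\<And>k. 0 < \<sigma> k"
  shows "spherical_L2 M (\<lambda>\<omega>. \<chi> k. ((transpose V *v X \<omega>) $ k - (transpose V *v \<mu>) $ k) / \<sigma> k) \<phi>"
proof -
  interpret prob_space M by fact
  define \<nu> where "\<nu> = transpose V *v \<mu>"
  define Z where "Z = (\<lambda>\<omega>. \<chi> k. ((transpose V *v X \<omega>) $ k - \<nu> $ k) / \<sigma> k)"
  have "(\<lambda>x. \<chi> k. ((transpose V *v x) $ k - \<nu> $ k) / \<sigma> k) \<in> borel_measurable borel"
    using \<sigma> by (intro borel_measurable_continuous_onI continuous_on_vec_lambda continuous_intros
        linear_continuous_on matrix_vector_mul_bounded_linear) (auto simp: less_imp_neq[symmetric])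
  then have "Z \<in> borel_measurable M"
    unfolding Z_def using measurable_compose[OF measurable_X] by blast
  then have spherical: "spherical M Z \<phi>"
    using char_standardized_elliptical[OF ell V \<Sigma> \<sigma>] by unfold_locales (simp_all add: Z_def \<nu>_def)
  then interpret spherical M Z \<phi> .
  have "integrable M (\<lambda>\<omega>. (Z \<omega> $ k)\<^sup>2)" for k
  proof (rule Bochner_Integration.integrable_bound)
    show "integrable M (\<lambda>\<omega>. 2 * ((norm (X \<omega>))\<^sup>2 + (\<nu> $ k)\<^sup>2) / (\<sigma> k)\<^sup>2)"
      using integrable_X by simp
    show "AE \<omega> in M. norm ((Z \<omega> $ k)\<^sup>2) \<le> norm (2 * ((norm (X \<omega>))\<^sup>2 + (\<nu> $ k)\<^sup>2) / (\<sigma> k)\<^sup>2)"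
      using rotated_component_diff_sq_le[OF V] \<sigma>[of k]
      by (intro AE_I2) (simp add: Z_def power_divide divide_right_mono)
  qed measurable
  then have "integrable M (\<lambda>\<omega>. (norm (Z \<omega>))\<^sup>2)"
    by (simp add: norm_vec_sq)
  then have "spherical_L2 M Z \<phi>"
    by (intro spherical_L2.intro spherical spherical_L2_axioms.intro)
  then show ?thesis
    by (simp add: Z_def \<nu>_def)
qed

theorem theorem9:
  fixes M :: "'a measure"
    and X :: "'a \<Rightarrow> real^('d::{finite,linorder})"
    and \<mu> :: "real^('d::{finite,linorder})" and \<Sigma> V :: "real^('d::{finite,linorder})^('d::{finite,linorder})" and lam :: "('d::{finite,linorder}) \<Rightarrow> real"
    and \<phi> :: "real \<Rightarrow> complex" and \<alpha> :: real
  assumes "prob_space M"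
    and "CARD('d) \<ge> 2"
    and "X \<in> borel_measurable M"
    and "integrable M (\<lambda>\<omega>. (norm (X \<omega>))\<^sup>2)"
    and "elliptical M X \<mu> \<Sigma> \<phi>"
    and "cov_matrix M X = \<Sigma>"
    and "\<forall>x. x \<noteq> 0 \<longrightarrow> x \<bullet> (\<Sigma> *v x) > 0"
    and "orthogonal_matrix V"
    and "\<Sigma> = V ** (\<chi> i j. if i = j then lam i else 0) ** transpose V"
    and "\<forall>i j. i \<le> j \<longrightarrow> lam j \<le> lam i"
    and "\<forall>i. lam i > 0"
    and "0 < \<alpha>" and "\<alpha> < 1"
    and "\<forall>i. measure M {\<omega> \<in> space M. (transpose V *v X \<omega>) $ i
              \<in> central_interval M (\<lambda>\<omega>. (transpose V *v X \<omega>) $ i) \<alpha>} > 0"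
  shows "let Y = (\<lambda>\<omega>. transpose V *v X \<omega>);
             L = (\<lambda>i. cond_cov_matrix M
                    {\<omega> \<in> space M. Y \<omega> $ i \<in> central_interval M (\<lambda>\<omega>. Y \<omega> $ i) \<alpha>} Y)
         in (\<forall>i. frob_norm (L (Min UNIV)) \<le> frob_norm (L i) \<and> frob_norm (L i) \<le> frob_norm (L (Max UNIV)))
          \<and> (\<forall>i j. det (L i) = det (L j))
          \<and> (\<forall>i. op_norm (L (Min UNIV)) \<le> op_norm (L i))
          \<and> (\<forall>i j. i \<noteq> Min UNIV \<longrightarrow> j \<noteq> Min UNIV \<longrightarrow> op_norm (L i) = op_norm (L j))"
proof -
  interpret prob_space M by fact
  define \<sigma> where "\<sigma> k = sqrt (lam k)" for k
  have \<sigma>: "0 < \<sigma> k" "(\<sigma> k)\<^sup>2 = lam k" for k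
    using assms(11) by (simp_all add: \<sigma>_def less_imp_le)
  define Z where "Z = (\<lambda>\<omega>. \<chi> k. ((transpose V *v X \<omega>) $ k - (transpose V *v \<mu>) $ k) / \<sigma> k)"
  interpret spherical_L2 M Z \<phi>
    unfolding Z_def using assms(1,3-5,8,9) \<sigma>
    by (intro elliptical_standardized_spherical) (simp_all add: diag_matrix_def)
  define Y where "Y = (\<lambda>\<omega>. transpose V *v X \<omega>)"
  have Y: "Y \<omega> = (\<chi> k. (transpose V *v \<mu>) $ k + \<sigma> k * Z \<omega> $ k)" for \<omega>
    using \<sigma>(1) by (simp add: Y_def Z_def vec_eq_iff less_imp_neq[symmetric])
  define m :: 'd where "m = Min UNIV"
  obtain j0 :: 'd where "j0 \<noteq> m"
    using assms(2) by (metis card_2_iff' ex_card)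
  define l u where "l = quantile M (\<lambda>\<omega>. Z \<omega> $ m) (\<alpha> / 2)"
    and "u = quantile M (\<lambda>\<omega>. Z \<omega> $ m) (1 - \<alpha> / 2)"
  have events: "{\<omega>\<in>space M. Y \<omega> $ i \<in> central_interval M (\<lambda>\<omega>. Y \<omega> $ i) \<alpha>}
      = {\<omega>\<in>space M. Z \<omega> $ i \<in> {l..u}}" for i
    using central_event_affine[OF Y \<sigma>(1) assms(12,13)] by (simp add: central_interval_def l_def u_def)
  interpret spherical_slab M Z \<phi> l u m j0
    using \<open>j0 \<noteq> m\<close> assms(14) events by unfold_locales (auto simp: Y_def)
  have "cond_cov_matrix M {\<omega>\<in>space M. Y \<omega> $ i \<in> central_interval M (\<lambda>\<omega>. Y \<omega> $ i) \<alpha>} Y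
      = spiked_diag lam slab_var_other slab_var i" for i
    unfolding events cond_cov_slab[OF Y] \<sigma>(2) ..
  then show ?thesis
    unfolding Let_def Y_def[symmetric]
    by (rule spiked_diag_norms[OF assms(10,11) slab_var_nonneg
          slab_var_le_other_central[OF assms(12,13) l_def u_def]])
qed

end
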